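(* Let $G$ be a maximal outerplanar graph with at least four vertices. Let $uv$ be an edge on its outer face with $\deg_G(u)>2$ and $\deg_G(v)>2$, let $w=\Delta(uv)$, and let $G_u=G_u(uv)$ and $G_v=G_v(uv)$ be the $uv$-segments. If $\mathrm{mvc}(G)=\mathrm{mvc}(G_u)+\mathrm{mvc}(G_v)$, then $$\mathrm{mvc}_u(G)=\min\{\mathrm{mvc}_u(G_u)+\mathrm{mvc}(G_v),\ \mathrm{mvc}(G_u)+\mathrm{mvc}_w(G_v),\ \mathrm{mvc}(G)+1\},$$ $$\mathrm{mvc}_v(G)=\min\{\mathrm{mvc}(G_u)+\mathrm{mvc}_v(G_v),\ \mathrm{mvc}_w(G_u)+\mathrm{mvc}(G_v),\ \mathrm{mvc}(G)+1\},$$ $$\mathrm{mvc}_{uv}(G)=\min\{\mathrm{mvc}_u(G_u)+\mathrm{mvc}_v(G_v),\ \mathrm{mvc}(G)+1\}.$$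
   Context: All graphs are finite and simple. A maximal outerplanar graph is an outerplanar graph to which no edge between existing vertices can be added while keeping it outerplanar. A fixed outerplanar embedding, with all vertices on the outer face, is assumed. For $S\subseteq V(G)$, $\mathrm{mvc}_S(G)$ is the minimum size of a vertex cover of $G$ containing $S$, and $\mathrm{mvc}(G)=\mathrm{mvc}_\emptyset(G)$. Braces are dropped for small sets, e.g. $\mathrm{mvc}_{uw}(G)=\mathrm{mvc}_{\{u,w\}}(G)$. For an edge $uv$ on the outer face of a maximal outerplanar graph with at least three vertices, $\Delta(uv)$ is the unique common neighbor of $u$ and $v$. $uv$-segments: let $w=\Delta(uv)$. $G_u(uv)$ is the maximal biconnected outerplanar subgraph of $G$ that has $uw$ on its outer face and does not contain $v$. Equivalently, it is the subgraph induced by $u$, $w$ and the vertices on the side of edge $uw$ not containing $v$; it is the single edge $uw$ if $\deg_G(u)=2$. $G_v(uv)$ is defined symmetrically. *)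

theory Defs
  imports Main
begin

definition simple_graph :: "'a set \<Rightarrow> ('a \<Rightarrow> 'a \<Rightarrow> bool) \<Rightarrow> bool" where
  "simple_graph V E \<longleftrightarrow> finite V \<and> (\<forall>x y. E x y \<longrightarrow> E y x) \<and> (\<forall>x. \<not> E x x)
     \<and> (\<forall>x y. E x y \<longrightarrow> x \<in> V \<and> y \<in> V)"

definition degree :: "'a set \<Rightarrow> ('a \<Rightarrow> 'a \<Rightarrow> bool) \<Rightarrow> 'a \<Rightarrow> nat" where
  "degree V E x = card {y \<in> V. E x y}"

text \<open>Outerplanar (convex) embedding: vertices placed on a circle in the cyclic order given
  by pos (positions 0..n-1); edges drawn as chords, no two of which cross.\<close>
definition outer_emb :: "'a set \<Rightarrow> ('a \<Rightarrow> 'a \<Rightarrow> bool) \<Rightarrow> ('a \<Rightarrow> nat) \<Rightarrow> bool" where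
  "outer_emb V E pos \<longleftrightarrow> bij_betw pos V {0..<card V} \<and>
     (\<forall>a\<in>V. \<forall>b\<in>V. \<forall>c\<in>V. \<forall>d\<in>V. E a b \<longrightarrow> E c d \<longrightarrow>
        \<not> (pos a < pos c \<and> pos c < pos b \<and> pos b < pos d))"

definition outerplanar :: "'a set \<Rightarrow> ('a \<Rightarrow> 'a \<Rightarrow> bool) \<Rightarrow> bool" where
  "outerplanar V E \<longleftrightarrow> (\<exists>pos. outer_emb V E pos)"

definition add_edge :: "('a \<Rightarrow> 'a \<Rightarrow> bool) \<Rightarrow> 'a \<Rightarrow> 'a \<Rightarrow> ('a \<Rightarrow> 'a \<Rightarrow> bool)" where
  "add_edge E x y = (\<lambda>a b. E a b \<or> (a = x \<and> b = y) \<or> (a = y \<and> b = x))"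

definition maximal_outerplanar :: "'a set \<Rightarrow> ('a \<Rightarrow> 'a \<Rightarrow> bool) \<Rightarrow> bool" where
  "maximal_outerplanar V E \<longleftrightarrow> simple_graph V E \<and> outerplanar V E \<and>
     (\<forall>x\<in>V. \<forall>y\<in>V. x \<noteq> y \<longrightarrow> \<not> E x y \<longrightarrow> \<not> outerplanar V (add_edge E x y))"

text \<open>Edge xy lies on the outer face of the embedding: x, y consecutive in the cyclic order.\<close>
definition outer_edge :: "'a set \<Rightarrow> ('a \<Rightarrow> nat) \<Rightarrow> 'a \<Rightarrow> 'a \<Rightarrow> bool" where
  "outer_edge V pos x y \<longleftrightarrow> pos y = (pos x + 1) mod card V \<or> pos x = (pos y + 1) mod card V"

text \<open>cyclic strict betweenness: b lies strictly inside the arc going from a to c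
  in increasing cyclic direction.\<close>
definition cbetw :: "nat \<Rightarrow> nat \<Rightarrow> nat \<Rightarrow> bool" where
  "cbetw a b c \<longleftrightarrow> (a < b \<and> b < c) \<or> (b < c \<and> c < a) \<or> (c < a \<and> a < b)"

text \<open>Vertex set of the segment G_x(xy) with w = Delta(xy): x, w and the vertices on the side
  of the chord xw not containing y.\<close>
definition seg_vertices :: "'a set \<Rightarrow> ('a \<Rightarrow> nat) \<Rightarrow> 'a \<Rightarrow> 'a \<Rightarrow> 'a \<Rightarrow> 'a set" where
  "seg_vertices V pos x w y = {x, w} \<union>
     {z \<in> V. z \<noteq> x \<and> z \<noteq> w \<and> cbetw (pos x) (pos z) (pos w) \<noteq> cbetw (pos x) (pos y) (pos w)}"

text \<open>Vertex covers of the subgraph induced on V (edges of E with both ends in V).\<close>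
definition is_vc :: "'a set \<Rightarrow> ('a \<Rightarrow> 'a \<Rightarrow> bool) \<Rightarrow> 'a set \<Rightarrow> bool" where
  "is_vc V E C \<longleftrightarrow> C \<subseteq> V \<and> (\<forall>x\<in>V. \<forall>y\<in>V. E x y \<longrightarrow> x \<in> C \<or> y \<in> C)"

definition mvcS :: "'a set \<Rightarrow> ('a \<Rightarrow> 'a \<Rightarrow> bool) \<Rightarrow> 'a set \<Rightarrow> nat" where
  "mvcS V E S = (LEAST k. \<exists>C. is_vc V E C \<and> S \<subseteq> C \<and> card C = k)"

definition mvc :: "'a set \<Rightarrow> ('a \<Rightarrow> 'a \<Rightarrow> bool) \<Rightarrow> nat" where
  "mvc V E = mvcS V E {}"

end

theory Submission
  imports Defs
begin

text \<open>The segments G_u and G_v cover G and share only w, and every edge of G other than uv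
  lies in one of them; any other edge between the two sides of w would cross the chord uw or vw.
  Hence a cover C of G restricts to covers of the segments with
  |C| + [w \<in> C] = |C \<inter> G_u| + |C \<inter> G_v|, and conversely covers of the segments glue to a cover
  of G as soon as one of them contains its endpoint of uv. Under mvc(G) = mvc(G_u) + mvc(G_v),
  two minimum covers of the segments that both contain w can never be glued in this way, and
  this excludes exactly the configurations in which an optimum of G with u, v or both
  prescribed could beat all candidates on the right-hand sides.\<close>

section \<open>Minimum vertex covers\<close>

lemma mvcS_attained:
  assumes "finite V" "S \<subseteq> V"
  obtains C where "is_vc V E C" "S \<subseteq> C" "card C = mvcS V E S"
proof -
  have "\<exists>k C. is_vc V E C \<and> S \<subseteq> C \<and> card C = k"
    using assms by (auto simp: is_vc_def)
  then have "\<exists>C. is_vc V E C \<and> S \<subseteq> C \<and> card C = mvcS V E S"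
    unfolding mvcS_def by (rule LeastI_ex)
  then show thesis using that by blast
qed

lemma mvc_attained:
  assumes "finite V"
  obtains C where "is_vc V E C" "card C = mvc V E"
  using mvcS_attained[OF assms empty_subsetI] unfolding mvc_def by blast

lemma mvcS_le_card: "is_vc V E C \<Longrightarrow> S \<subseteq> C \<Longrightarrow> mvcS V E S \<le> card C"
  unfolding mvcS_def by (rule Least_le) blast

lemma mvc_le_card: "is_vc V E C \<Longrightarrow> mvc V E \<le> card C"
  unfolding mvc_def by (rule mvcS_le_card) auto

lemma is_vc_subset: "is_vc V E C \<Longrightarrow> C \<subseteq> V"
  unfolding is_vc_def by blast

lemma is_vc_finite: "finite V \<Longrightarrow> is_vc V E C \<Longrightarrow> finite C"
  by (rule finite_subset[OF is_vc_subset])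

lemma is_vc_insert: "is_vc V E C \<Longrightarrow> x \<in> V \<Longrightarrow> is_vc V E (insert x C)"
  unfolding is_vc_def by blast

lemma is_vc_Int: "is_vc V E C \<Longrightarrow> X \<subseteq> V \<Longrightarrow> is_vc X E (C \<inter> X)"
  unfolding is_vc_def by blast

lemma mvcS_singleton_le:
  assumes "finite V" "x \<in> V"
  shows "mvcS V E {x} \<le> mvc V E + 1"
proof -
  obtain M where M: "is_vc V E M" "card M = mvc V E"
    using assms(1) by (rule mvc_attained)
  have "finite M" using is_vc_finite[OF assms(1) M(1)] .
  then have "card (insert x M) \<le> mvc V E + 1" using M(2) by (simp add: card_insert_if)
  moreover have "mvcS V E {x} \<le> card (insert x M)"
    using mvcS_le_card is_vc_insert[OF M(1) assms(2)] by blast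
  ultimately show ?thesis by linarith
qed

lemma mvcS_edge_le:
  assumes "finite V" "x \<in> V" "y \<in> V" "E x y"
  shows "mvcS V E {x, y} \<le> mvc V E + 1"
proof -
  obtain M where M: "is_vc V E M" "card M = mvc V E"
    using assms(1) by (rule mvc_attained)
  have "finite M" using is_vc_finite[OF assms(1) M(1)] .
  moreover have "x \<in> M \<or> y \<in> M" using M(1) assms(2-4) unfolding is_vc_def by blast
  ultimately have "insert x (insert y M) = insert x M \<or> insert x (insert y M) = insert y M"
    by blast
  with \<open>finite M\<close> have "card (insert x (insert y M)) \<le> mvc V E + 1"
    using M(2) by (auto simp: card_insert_if)
  moreover have "mvcS V E {x, y} \<le> card (insert x (insert y M))"
    by (rule mvcS_le_card[OF is_vc_insert[OF is_vc_insert[OF M(1) assms(3)] assms(2)]]) blast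
  ultimately show ?thesis by linarith
qed

section \<open>Gluing covers at a shared vertex\<close>

locale triangle_split =
  fixes V :: "'a set" and E :: "'a \<Rightarrow> 'a \<Rightarrow> bool" and Su Sv :: "'a set" and u v w :: 'a
  assumes finite_V: "finite V"
    and sym: "E x y \<Longrightarrow> E y x"
    and Su_Un_Sv: "Su \<union> Sv = V"
    and Su_Int_Sv: "Su \<inter> Sv = {w}"
    and u_in_Su: "u \<in> Su" and v_in_Sv: "v \<in> Sv"
    and edge_uv: "E u v" and edge_uw: "E u w" and edge_vw: "E v w"
    and edge_split: "x \<in> V \<Longrightarrow> y \<in> V \<Longrightarrow> E x y \<Longrightarrow>
      (x \<in> Su \<and> y \<in> Su) \<or> (x \<in> Sv \<and> y \<in> Sv) \<or> (x = u \<and> y = v) \<or> (x = v \<and> y = u)"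
begin

lemma w_in: "w \<in> Su" "w \<in> Sv"
  using Su_Int_Sv by auto

lemma segments_subset: "Su \<subseteq> V" "Sv \<subseteq> V"
  using Su_Un_Sv by auto

lemma finite_segments: "finite Su" "finite Sv"
  using segments_subset finite_V finite_subset by auto

lemma is_vc_Un:
  assumes "is_vc Su E A" "is_vc Sv E B" "u \<in> A \<or> v \<in> B"
  shows "is_vc V E (A \<union> B)"
  unfolding is_vc_def
proof (intro conjI ballI impI)
  show "A \<union> B \<subseteq> V"
    using is_vc_subset[OF assms(1)] is_vc_subset[OF assms(2)] segments_subset by blast
next
  fix x y assume "x \<in> V" "y \<in> V" "E x y"
  then consider "x \<in> Su" "y \<in> Su" | "x \<in> Sv" "y \<in> Sv" | "x = u" "y = v" | "x = v" "y = u"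
    using edge_split by blast
  then show "x \<in> A \<union> B \<or> y \<in> A \<union> B"
    using assms \<open>E x y\<close> unfolding is_vc_def by cases auto
qed

lemma card_Un_segments:
  assumes "A \<subseteq> Su" "B \<subseteq> Sv"
  shows "card (A \<union> B) + (if w \<in> A \<and> w \<in> B then 1 else 0) = card A + card B"
proof -
  have "finite A" "finite B" using assms finite_segments finite_subset by auto
  then have "card A + card B = card (A \<union> B) + card (A \<inter> B)" by (rule card_Un_Int)
  moreover have "A \<inter> B = (if w \<in> A \<and> w \<in> B then {w} else {})"
    using assms Su_Int_Sv by auto
  ultimately show ?thesis by simp
qed

lemma mvcS_le_glue:
  assumes "is_vc Su E A" "is_vc Sv E B" "u \<in> A \<or> v \<in> B" "S \<subseteq> A \<union> B"
  shows "mvcS V E S + (if w \<in> A \<and> w \<in> B then 1 else 0) \<le> card A + card B"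
  using mvcS_le_card[OF is_vc_Un[OF assms(1-3)] assms(4)]
    card_Un_segments[OF is_vc_subset[OF assms(1)] is_vc_subset[OF assms(2)]] by linarith

lemma card_split:
  assumes "C \<subseteq> V"
  shows "card C + (if w \<in> C then 1 else 0) = card (C \<inter> Su) + card (C \<inter> Sv)"
proof -
  have "C = (C \<inter> Su) \<union> (C \<inter> Sv)" using assms Su_Un_Sv by auto
  then show ?thesis using card_Un_segments[of "C \<inter> Su" "C \<inter> Sv"] w_in by auto
qed

lemma mvcS_u_le:
  "mvcS V E {u} \<le> min (mvcS Su E {u} + mvc Sv E) (min (mvc Su E + mvcS Sv E {w}) (mvc V E + 1))"
proof -
  obtain Au where Au: "is_vc Su E Au" "u \<in> Au" "card Au = mvcS Su E {u}"
    using mvcS_attained[OF finite_segments(1), where S = "{u}"] u_in_Su by auto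
  obtain A0 where A0: "is_vc Su E A0" "card A0 = mvc Su E"
    using finite_segments(1) by (rule mvc_attained)
  obtain B0 where B0: "is_vc Sv E B0" "card B0 = mvc Sv E"
    using finite_segments(2) by (rule mvc_attained)
  obtain Bw where Bw: "is_vc Sv E Bw" "w \<in> Bw" "card Bw = mvcS Sv E {w}"
    using mvcS_attained[OF finite_segments(2), where S = "{w}"] w_in by auto
  have "mvcS V E {u} \<le> mvcS Su E {u} + mvc Sv E"
    using mvcS_le_glue[OF Au(1) B0(1), where S = "{u}"] Au B0 by auto
  moreover have "mvcS V E {u} \<le> mvc Su E + mvcS Sv E {w}"
  proof -
    let ?A = "insert u A0"
    have A: "is_vc Su E ?A" using is_vc_insert[OF A0(1) u_in_Su] .
    have "finite A0" using is_vc_finite[OF finite_segments(1) A0(1)] .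
    moreover have "u \<in> A0 \<or> w \<in> A0"
      using A0(1) edge_uw u_in_Su w_in unfolding is_vc_def by blast
    ultimately have "card ?A \<le> card A0 + (if w \<in> ?A \<and> w \<in> Bw then 1 else 0)"
      using Bw(2) by (auto simp: card_insert_if)
    then show ?thesis using mvcS_le_glue[OF A Bw(1), where S = "{u}"] A0 Bw by auto
  qed
  moreover have "mvcS V E {u} \<le> mvc V E + 1"
    using mvcS_singleton_le[OF finite_V] u_in_Su segments_subset(1) by blast
  ultimately show ?thesis by simp
qed

lemma mvcS_u_ge:
  assumes additive: "mvc V E = mvc Su E + mvc Sv E"
  shows "min (mvcS Su E {u} + mvc Sv E) (min (mvc Su E + mvcS Sv E {w}) (mvc V E + 1))
    \<le> mvcS V E {u}"
proof -
  obtain C where C: "is_vc V E C" "{u} \<subseteq> C" "card C = mvcS V E {u}"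
    by (rule mvcS_attained[OF finite_V, where S = "{u}"]) (use u_in_Su segments_subset in auto)
  define A B where "A = C \<inter> Su" and "B = C \<inter> Sv"
  have A: "is_vc Su E A" and B: "is_vc Sv E B"
    unfolding A_def B_def using is_vc_Int[OF C(1)] segments_subset by auto
  have split: "card C + (if w \<in> C then 1 else 0) = card A + card B"
    unfolding A_def B_def using card_split[OF is_vc_subset[OF C(1)]] .
  have "mvcS Su E {u} \<le> card A"
    using mvcS_le_card[OF A] C(2) u_in_Su unfolding A_def by blast
  moreover have "mvc Su E \<le> card A" "mvc Sv E \<le> card B" "mvc V E \<le> card C"
    using mvc_le_card A B C(1) by blast+
  moreover have "w \<in> C \<Longrightarrow> mvcS Sv E {w} \<le> card B"
    using mvcS_le_card[OF B] w_in unfolding B_def by blast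
  ultimately show ?thesis
    using split additive C(3) by (cases "w \<in> C") (simp_all add: min_le_iff_disj, linarith)
qed

lemma mvcS_u_eq:
  assumes "mvc V E = mvc Su E + mvc Sv E"
  shows "mvcS V E {u} =
    min (mvcS Su E {u} + mvc Sv E) (min (mvc Su E + mvcS Sv E {w}) (mvc V E + 1))"
  using mvcS_u_le mvcS_u_ge[OF assms] by (rule antisym)

text \<open>A minimum cover of Sv avoiding v contains w, and gluing it to A would beat mvc V E.\<close>
lemma mvcS_v_le_mvc:
  assumes additive: "mvc V E = mvc Su E + mvc Sv E"
    and A: "is_vc Su E A" "u \<in> A" "w \<in> A" "card A = mvc Su E"
  shows "mvcS Sv E {v} \<le> mvc Sv E"
proof -
  obtain B where B: "is_vc Sv E B" "card B = mvc Sv E"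
    using finite_segments(2) by (rule mvc_attained)
  have "v \<in> B"
  proof (rule ccontr)
    assume "v \<notin> B"
    then have "w \<in> B" using B(1) edge_vw v_in_Sv w_in unfolding is_vc_def by blast
    then show False
      using mvcS_le_glue[OF A(1) B(1), where S = "{}"] A(2,3,4) B(2) additive
      unfolding mvc_def by simp
  qed
  then show ?thesis using mvcS_le_card[OF B(1)] B(2) by simp
qed

end

lemma triangle_split_swap:
  assumes "triangle_split V E Su Sv u v w"
  shows "triangle_split V E Sv Su v u w"
proof -
  interpret triangle_split V E Su Sv u v w by (fact assms)
  show ?thesis
    using finite_V sym Su_Un_Sv Su_Int_Sv u_in_Su v_in_Sv edge_uv edge_uw edge_vw edge_split
    by unfold_locales blast+
qed

sublocale triangle_split \<subseteq> swapped: triangle_split V E Sv Su v u w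
  by (rule triangle_split_swap) (rule triangle_split_axioms)

context triangle_split
begin

lemma mvcS_v_eq:
  assumes "mvc V E = mvc Su E + mvc Sv E"
  shows "mvcS V E {v} =
    min (mvc Su E + mvcS Sv E {v}) (min (mvcS Su E {w} + mvc Sv E) (mvc V E + 1))"
  using swapped.mvcS_u_eq assms by (simp add: add.commute)

lemma mvcS_uv_le: "mvcS V E {u, v} \<le> min (mvcS Su E {u} + mvcS Sv E {v}) (mvc V E + 1)"
proof -
  obtain A where A: "is_vc Su E A" "{u} \<subseteq> A" "card A = mvcS Su E {u}"
    by (rule mvcS_attained[OF finite_segments(1), where S = "{u}"]) (use u_in_Su in auto)
  obtain B where B: "is_vc Sv E B" "{v} \<subseteq> B" "card B = mvcS Sv E {v}"
    by (rule mvcS_attained[OF finite_segments(2), where S = "{v}"]) (use v_in_Sv in auto)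
  have "mvcS V E {u, v} \<le> mvcS Su E {u} + mvcS Sv E {v}"
    using mvcS_le_glue[OF A(1) B(1), where S = "{u, v}"] A B by auto
  moreover have "mvcS V E {u, v} \<le> mvc V E + 1"
    by (rule mvcS_edge_le[OF finite_V]) (use u_in_Su v_in_Sv segments_subset edge_uv in auto)
  ultimately show ?thesis by simp
qed

lemma mvcS_uv_ge:
  assumes additive: "mvc V E = mvc Su E + mvc Sv E"
  shows "min (mvcS Su E {u} + mvcS Sv E {v}) (mvc V E + 1) \<le> mvcS V E {u, v}"
proof -
  obtain C where C: "is_vc V E C" "{u, v} \<subseteq> C" "card C = mvcS V E {u, v}"
    by (rule mvcS_attained[OF finite_V, where S = "{u, v}"])
      (use u_in_Su v_in_Sv segments_subset in auto)
  define A B where "A = C \<inter> Su" and "B = C \<inter> Sv"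
  have A: "is_vc Su E A" "u \<in> A" and B: "is_vc Sv E B" "v \<in> B"
    unfolding A_def B_def using is_vc_Int[OF C(1)] segments_subset C(2) u_in_Su v_in_Sv by auto
  have split: "card C + (if w \<in> C then 1 else 0) = card A + card B"
    unfolding A_def B_def using card_split[OF is_vc_subset[OF C(1)]] .
  have Au: "mvcS Su E {u} \<le> card A" and Bv: "mvcS Sv E {v} \<le> card B"
    using mvcS_le_card A B by blast+
  have min_le: "mvc Su E \<le> card A" "mvc Sv E \<le> card B" "mvc V E \<le> card C"
    using mvc_le_card A(1) B(1) C(1) by blast+
  then consider "w \<notin> C" | "mvc V E < card C" | "w \<in> C" "card A = mvc Su E" | "w \<in> C" "card B = mvc Sv E"
    using split additive by (cases "w \<in> C"; cases "card A = mvc Su E"; cases "card B = mvc Sv E") auto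
  then show ?thesis
  proof cases
    case 3
    then have "mvcS Sv E {v} \<le> mvc Sv E"
      using mvcS_v_le_mvc[OF additive A(1,2)] w_in unfolding A_def by blast
    then show ?thesis using 3 split Au min_le additive C(3) by simp
  next
    case 4
    then have "mvcS Su E {u} \<le> mvc Su E"
      using swapped.mvcS_v_le_mvc[OF _ B(1,2)] additive w_in unfolding B_def by (simp add: add.commute)
    then show ?thesis using 4 split Bv min_le additive C(3) by simp
  qed (use split Au Bv C(3) in auto)
qed

lemma mvcS_uv_eq:
  assumes "mvc V E = mvc Su E + mvc Sv E"
  shows "mvcS V E {u, v} = min (mvcS Su E {u} + mvcS Sv E {v}) (mvc V E + 1)"
  using mvcS_uv_le mvcS_uv_ge[OF assms] by (rule antisym)

end

section \<open>Segments of an outer edge\<close>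

lemma cbetw_rotate: "cbetw a b c \<longleftrightarrow> cbetw b c a"
  unfolding cbetw_def by auto

lemma cbetw_asym: "cbetw a b c \<Longrightarrow> \<not> cbetw a c b"
  unfolding cbetw_def by auto

lemma not_cbetw_imp_cbetw_rev:
  "a \<noteq> b \<Longrightarrow> b \<noteq> c \<Longrightarrow> a \<noteq> c \<Longrightarrow> \<not> cbetw a b c \<Longrightarrow> cbetw c b a"
  unfolding cbetw_def by linarith

lemma succ_mod_cases:
  fixes a n :: nat
  assumes "b = (a + 1) mod n" "a < n"
  obtains "b = a + 1" "a + 1 < n" | "b = 0" "a + 1 = n"
proof (cases "a + 1 < n")
  case False
  with assms have "a + 1 = n" by simp
  with assms show ?thesis using that by simp
qed (use assms that in simp)

lemma cbetw_succ_iff: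
  fixes n :: nat
  assumes "b = (a + 1) mod n" "a < n" "x < n" "c < n" "x \<noteq> a" "x \<noteq> b" "c \<noteq> a"
  shows "cbetw a x c \<longleftrightarrow> cbetw b x c"
  using assms(1,2) by (cases rule: succ_mod_cases) (use assms in \<open>auto simp: cbetw_def\<close>)

lemma cbetw_succ:
  fixes n :: nat
  assumes "b = (a + 1) mod n" "a < n" "c < n" "c \<noteq> a" "c \<noteq> b"
  shows "cbetw a b c"
  using assms(1,2) by (cases rule: succ_mod_cases) (use assms in \<open>auto simp: cbetw_def\<close>)

lemma outer_emb_no_crossing:
  assumes emb: "outer_emb V E pos" and sym: "\<And>x y. E x y \<Longrightarrow> E y x"
    and "a \<in> V" "b \<in> V" "c \<in> V" "d \<in> V" and "E a b" "E c d"
    and "cbetw (pos a) (pos c) (pos b)" "cbetw (pos b) (pos d) (pos a)"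
  shows False
proof -
  have no_cross: "\<not> (pos p < pos r \<and> pos r < pos q \<and> pos q < pos s)"
    if "p \<in> V" "q \<in> V" "r \<in> V" "s \<in> V" "E p q" "E r s" for p q r s
    using emb that unfolding outer_emb_def by blast
  have "\<not> (pos a < pos c \<and> pos c < pos b \<and> pos b < pos d)"
    and "\<not> (pos c < pos b \<and> pos b < pos d \<and> pos d < pos a)"
    and "\<not> (pos b < pos d \<and> pos d < pos a \<and> pos a < pos c)"
    and "\<not> (pos d < pos a \<and> pos a < pos c \<and> pos c < pos b)"
    using no_cross assms(3-8) sym by blast+
  then show False using assms(9,10) unfolding cbetw_def by linarith
qed

locale outer_triangle =
  fixes V :: "'a set" and E :: "'a \<Rightarrow> 'a \<Rightarrow> bool" and pos :: "'a \<Rightarrow> nat" and u v w :: 'a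
  assumes simple: "simple_graph V E" and emb: "outer_emb V E pos"
    and in_V: "u \<in> V" "v \<in> V" "w \<in> V"
    and edge_uv: "E u v" and edge_uw: "E u w" and edge_vw: "E v w"
    and pos_succ: "pos v = (pos u + 1) mod card V"
begin

abbreviation "Su \<equiv> seg_vertices V pos u w v"
abbreviation "Sv \<equiv> seg_vertices V pos v w u"

lemma sym: "E x y \<Longrightarrow> E y x"
  using simple unfolding simple_graph_def by blast

lemma pos_less: "x \<in> V \<Longrightarrow> pos x < card V"
  using emb unfolding outer_emb_def bij_betw_def by auto

lemma pos_eq_iff: "x \<in> V \<Longrightarrow> y \<in> V \<Longrightarrow> pos x = pos y \<longleftrightarrow> x = y"
  using emb unfolding outer_emb_def bij_betw_def inj_on_def by blast

lemma distinct: "u \<noteq> v" "u \<noteq> w" "v \<noteq> w"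
  using simple edge_uv edge_uw edge_vw unfolding simple_graph_def by auto

lemma pos_distinct: "pos u \<noteq> pos v" "pos u \<noteq> pos w" "pos v \<noteq> pos w"
  using distinct pos_eq_iff in_V by auto

lemma cbetw_u_v_w: "cbetw (pos u) (pos v) (pos w)"
  by (rule cbetw_succ[OF pos_succ]) (use pos_less in_V pos_distinct in auto)

lemma cbetw_v_w_u: "cbetw (pos v) (pos w) (pos u)"
  using cbetw_u_v_w cbetw_rotate by blast

lemma cbetw_w_u_v: "cbetw (pos w) (pos u) (pos v)"
  using cbetw_v_w_u cbetw_rotate by blast

lemma arc_shift:
  assumes "z \<in> V" "z \<noteq> u" "z \<noteq> v"
  shows "cbetw (pos u) (pos z) (pos w) \<longleftrightarrow> cbetw (pos v) (pos z) (pos w)"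
proof (rule cbetw_succ_iff[OF pos_succ])
  show "pos z \<noteq> pos u" "pos z \<noteq> pos v"
    using assms pos_eq_iff in_V by blast+
qed (use assms pos_less in_V pos_distinct in auto)

lemma mem_Su_iff:
  "x \<in> Su \<longleftrightarrow> x = u \<or> x = w \<or> (x \<in> V \<and> x \<noteq> u \<and> x \<noteq> w \<and> \<not> cbetw (pos u) (pos x) (pos w))"
  using cbetw_u_v_w unfolding seg_vertices_def by auto

lemma mem_Sv_iff:
  "x \<in> Sv \<longleftrightarrow> x = v \<or> x = w \<or> (x \<in> V \<and> x \<noteq> v \<and> x \<noteq> w \<and> cbetw (pos v) (pos x) (pos w))"
  using cbetw_asym[OF cbetw_v_w_u] unfolding seg_vertices_def by auto

lemma Su_Un_Sv: "Su \<union> Sv = V"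
proof (intro equalityI subsetI)
  fix z assume "z \<in> Su \<union> Sv"
  then show "z \<in> V" using in_V unfolding Un_iff mem_Su_iff mem_Sv_iff by blast
next
  fix z assume z: "z \<in> V"
  show "z \<in> Su \<union> Sv"
  proof (cases "z = u \<or> z = v \<or> z = w")
    case True
    then show ?thesis unfolding Un_iff mem_Su_iff mem_Sv_iff by blast
  next
    case False
    then show ?thesis using arc_shift[OF z] z unfolding Un_iff mem_Su_iff mem_Sv_iff by blast
  qed
qed

lemma u_notin_Sv: "u \<notin> Sv"
  using distinct cbetw_asym[OF cbetw_v_w_u] unfolding mem_Sv_iff by blast

lemma v_notin_Su: "v \<notin> Su"
  using distinct cbetw_u_v_w unfolding mem_Su_iff by blast

lemma Su_Int_Sv: "Su \<inter> Sv = {w}"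
proof (intro equalityI subsetI)
  fix z assume z: "z \<in> Su \<inter> Sv"
  then have "z \<noteq> u" "z \<noteq> v" using u_notin_Sv v_notin_Su by auto
  then show "z \<in> {w}" using z arc_shift unfolding Int_iff mem_Su_iff mem_Sv_iff by blast
qed (simp add: mem_Su_iff mem_Sv_iff)

lemma Sv_in_arc_u_w:
  assumes "y \<in> Sv" "y \<noteq> w"
  shows "cbetw (pos u) (pos y) (pos w)"
proof (cases "y = v")
  case False
  then show ?thesis using assms arc_shift u_notin_Sv unfolding mem_Sv_iff by blast
qed (simp add: cbetw_u_v_w)

lemma Su_in_arc_w_u:
  assumes "x \<in> Su" "x \<noteq> u" "x \<noteq> w"
  shows "cbetw (pos w) (pos x) (pos u)"
  using assms not_cbetw_imp_cbetw_rev pos_eq_iff in_V pos_distinct unfolding mem_Su_iff by metis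

lemma Su_in_arc_w_v:
  assumes "x \<in> Su" "x \<noteq> w"
  shows "cbetw (pos w) (pos x) (pos v)"
proof (cases "x = u")
  case True
  then show ?thesis using cbetw_w_u_v by simp
next
  case False
  have "x \<in> V" using assms(1) Su_Un_Sv by blast
  have "cbetw (pos u) (pos w) (pos x)"
    using Su_in_arc_w_u[OF assms(1) False assms(2)] cbetw_rotate by blast
  moreover have "pos w \<noteq> pos u" "pos w \<noteq> pos v" "pos x \<noteq> pos u"
    using pos_distinct pos_eq_iff in_V \<open>x \<in> V\<close> False by auto
  ultimately have "cbetw (pos v) (pos w) (pos x)"
    using cbetw_succ_iff[OF pos_succ] pos_less in_V \<open>x \<in> V\<close> by blast
  then show ?thesis using cbetw_rotate by blast
qed

text \<open>An edge between the two sides of w would cross the chord uw or the chord vw.\<close>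
lemma edge_across:
  assumes "x \<in> Su" "x \<noteq> w" "y \<in> Sv" "y \<noteq> w" "E x y"
  shows "x = u \<and> y = v"
proof (rule ccontr)
  assume not_uv: "\<not> (x = u \<and> y = v)"
  have "x \<in> V" "y \<in> V" using assms Su_Un_Sv by auto
  show False
  proof (cases "x = u")
    case True
    then have "cbetw (pos v) (pos y) (pos w)" using assms(3,4) not_uv mem_Sv_iff by auto
    moreover have "cbetw (pos w) (pos x) (pos v)" using Su_in_arc_w_v assms(1,2) .
    ultimately show False
      using outer_emb_no_crossing[OF emb sym, of v w y x] in_V \<open>x \<in> V\<close> \<open>y \<in> V\<close>
        edge_vw sym[OF assms(5)] by blast
  next
    case False
    then show False
      using outer_emb_no_crossing[OF emb sym, of u w y x] in_V \<open>x \<in> V\<close> \<open>y \<in> V\<close>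
        edge_uw sym[OF assms(5)] Sv_in_arc_u_w[OF assms(3,4)] Su_in_arc_w_u[OF assms(1) False assms(2)]
      by blast
  qed
qed

lemma triangle_split: "triangle_split V E Su Sv u v w"
proof unfold_locales
  show "finite V" using simple unfolding simple_graph_def by blast
  show "u \<in> Su" "v \<in> Sv" unfolding seg_vertices_def by auto
  fix x y
  assume "x \<in> V" "y \<in> V" "E x y"
  then show "(x \<in> Su \<and> y \<in> Su) \<or> (x \<in> Sv \<and> y \<in> Sv) \<or> (x = u \<and> y = v) \<or> (x = v \<and> y = u)"
    using edge_across[of x y] edge_across[of y x] sym Su_Un_Sv Su_Int_Sv by blast
qed (use sym Su_Un_Sv Su_Int_Sv edge_uv edge_uw edge_vw in auto)

end

theorem lemma3:
  fixes V :: "'a set" and E :: "'a \<Rightarrow> 'a \<Rightarrow> bool" and pos :: "'a \<Rightarrow> nat" and u v w :: 'a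
  assumes mop: "maximal_outerplanar V E"
    and card4: "card V \<ge> 4"
    and emb: "outer_emb V E pos"
    and uV: "u \<in> V" and vV: "v \<in> V" and uv: "E u v"
    and outer: "outer_edge V pos u v"
    and degu: "degree V E u > 2" and degv: "degree V E v > 2"
    and wV: "w \<in> V" and uw: "E u w" and vw: "E v w"
    and hyp: "mvc V E = mvc (seg_vertices V pos u w v) E + mvc (seg_vertices V pos v w u) E"
  shows "mvcS V E {u} = min (mvcS (seg_vertices V pos u w v) E {u} + mvc (seg_vertices V pos v w u) E)
                          (min (mvc (seg_vertices V pos u w v) E + mvcS (seg_vertices V pos v w u) E {w})
                               (mvc V E + 1))
       \<and> mvcS V E {v} = min (mvc (seg_vertices V pos u w v) E + mvcS (seg_vertices V pos v w u) E {v})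
                          (min (mvcS (seg_vertices V pos u w v) E {w} + mvc (seg_vertices V pos v w u) E)
                               (mvc V E + 1))
       \<and> mvcS V E {u, v} = min (mvcS (seg_vertices V pos u w v) E {u} + mvcS (seg_vertices V pos v w u) E {v})
                             (mvc V E + 1)"
proof -
  have simple: "simple_graph V E"
    using mop unfolding maximal_outerplanar_def by blast
  then have sym: "E x y \<Longrightarrow> E y x" for x y
    unfolding simple_graph_def by blast
  have "triangle_split V E (seg_vertices V pos u w v) (seg_vertices V pos v w u) u v w"
  proof (cases "pos v = (pos u + 1) mod card V")
    case True
    then show ?thesis
      by (intro outer_triangle.triangle_split outer_triangle.intro[OF simple emb uV vV wV uv uw vw])
  next
    case False
    then have "pos u = (pos v + 1) mod card V"
      using outer unfolding outer_edge_def by blast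
    then have "triangle_split V E (seg_vertices V pos v w u) (seg_vertices V pos u w v) v u w"
      by (intro outer_triangle.triangle_split outer_triangle.intro[OF simple emb vV uV wV sym[OF uv] vw uw])
    then show ?thesis by (rule triangle_split_swap)
  qed
  then interpret triangle_split V E "seg_vertices V pos u w v" "seg_vertices V pos v w u" u v w .
  show ?thesis using mvcS_u_eq[OF hyp] mvcS_v_eq[OF hyp] mvcS_uv_eq[OF hyp] by blast
qed

end
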